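(* Let $r,g,a,h,m$ be positive integers with $a\le r$ and $ga+h<gr$, and put $n=rg$. Suppose that $q\ge r$ is a prime power satisfying $q^m\ge \frac{mn}{r}$ and that there is a $q$-ary $[r,r-a,a+1]$ linear code. If (i) $m\ge r$, or (ii) $m<r$ and there exists a $q$-ary $[r,r-m,\ge h+a+1]$ linear code, then there exists an MR $(n,r,h,a)$-LRC over a field of size $\ell=q^{\min\{hm,\frac{nm}{r}\}}$.
   Context: Definition: let $\ell$ be a prime power, $a,g,r,h$ positive integers with $ga+h<gr$, $n=gr$, $k=n-ga-h$. An MR (maximally recoverable) $(n,r,h,a)_\ell$-LRC is an $[n,k]$ linear code over $\mathbb{F}_\ell$ with a parity-check matrix $H\in\mathbb{F}_\ell^{(n-k)\times n}$ of the block form whose first $ga$ rows are block diagonal with diagonal blocks $A_1,\dots,A_g$ (each of size $a\times r$, the $n$ coordinates being split into $g$ consecutive groups of size $r$) and whose last $h$ rows are $(D_1|\cdots|D_g)$ with each $D_i$ of size $h\times r$, such that (i) each $A_i$ generates an $[r,a,r-a+1]_\ell$ MDS code, and (ii) every set of $ag+h$ columns of $H$ consisting of any $a$ columns from each group together with any $h$ further columns is linearly independent over $\mathbb{F}_\ell$. "An MR $(n,r,h,a)$-LRC over a field of size $\ell$" means an MR $(n,r,h,a)_\ell$-LRC. *)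

theory Defs
  imports Complex_Main "HOL-Library.Cardinality" "HOL-Computational_Algebra.Primes"
begin

text \<open>Vectors of length n over a field are functions nat => 'a vanishing outside {..<n}.\<close>

definition vecs :: "nat \<Rightarrow> (nat \<Rightarrow> 'a::field) set" where
  "vecs n = {v. \<forall>i\<ge>n. v i = 0}"

definition hweight :: "nat \<Rightarrow> (nat \<Rightarrow> 'a::field) \<Rightarrow> nat" where
  "hweight n v = card {i. i < n \<and> v i \<noteq> 0}"

definition linear_code :: "nat \<Rightarrow> nat \<Rightarrow> (nat \<Rightarrow> 'a::field) set \<Rightarrow> bool" where
  "linear_code n k C \<longleftrightarrow>
     C \<subseteq> vecs n \<and> (\<lambda>_. 0) \<in> C \<and>
     (\<forall>u\<in>C. \<forall>v\<in>C. (\<lambda>i. u i + v i) \<in> C) \<and>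
     (\<forall>c. \<forall>v\<in>C. (\<lambda>i. c * v i) \<in> C) \<and>
     (\<exists>b :: nat \<Rightarrow> nat \<Rightarrow> 'a.
        (\<forall>t<k. b t \<in> C) \<and>
        (\<forall>c. (\<forall>i. (\<Sum>t<k. c t * b t i) = 0) \<longrightarrow> (\<forall>t<k. c t = 0)) \<and>
        (\<forall>v\<in>C. \<exists>c. \<forall>i. v i = (\<Sum>t<k. c t * b t i)))"

definition min_dist_ge :: "nat \<Rightarrow> (nat \<Rightarrow> 'a::field) set \<Rightarrow> nat \<Rightarrow> bool" where
  "min_dist_ge n C d \<longleftrightarrow> (\<forall>v\<in>C. v \<noteq> (\<lambda>_. 0) \<longrightarrow> hweight n v \<ge> d)"

definition min_dist :: "nat \<Rightarrow> (nat \<Rightarrow> 'a::field) set \<Rightarrow> nat \<Rightarrow> bool" where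
  "min_dist n C d \<longleftrightarrow> min_dist_ge n C d \<and>
     (C \<noteq> {\<lambda>_. 0} \<longrightarrow> (\<exists>v\<in>C. v \<noteq> (\<lambda>_. 0) \<and> hweight n v = d))"

definition row_space :: "nat \<Rightarrow> nat \<Rightarrow> (nat \<Rightarrow> nat \<Rightarrow> 'a::field) \<Rightarrow> (nat \<Rightarrow> 'a) set" where
  "row_space a r M = {v. \<exists>c. \<forall>j. v j = (if j < r then (\<Sum>t<a. c t * M t j) else 0)}"

text \<open>The block parity-check matrix H of size (g*a+h) x (g*r) built from
  A i (a x r, i<g) on the block diagonal in the first g*a rows and
  D i (h x r) in the last h rows. Column j belongs to group j div r, position j mod r.\<close>

definition lrc_H :: "nat \<Rightarrow> nat \<Rightarrow> nat \<Rightarrow> nat \<Rightarrow>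
    (nat \<Rightarrow> nat \<Rightarrow> nat \<Rightarrow> 'a::field) \<Rightarrow> (nat \<Rightarrow> nat \<Rightarrow> nat \<Rightarrow> 'a) \<Rightarrow> nat \<Rightarrow> nat \<Rightarrow> 'a" where
  "lrc_H g r h a A D row j =
     (if row < g * a then
        (if row div a = j div r then A (j div r) (row mod a) (j mod r) else 0)
      else D (j div r) (row - g * a) (j mod r))"

definition cols_indep :: "nat \<Rightarrow> (nat \<Rightarrow> nat \<Rightarrow> 'a::field) \<Rightarrow> nat set \<Rightarrow> bool" where
  "cols_indep m H S \<longleftrightarrow>
     (\<forall>c. (\<forall>row<m. (\<Sum>j\<in>S. c j * H row j) = 0) \<longrightarrow> (\<forall>j\<in>S. c j = 0))"

definition MR_LRC :: "nat \<Rightarrow> nat \<Rightarrow> nat \<Rightarrow> nat \<Rightarrow> (nat \<Rightarrow> 'a::field) set \<Rightarrow> bool" where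
  "MR_LRC n r h a C \<longleftrightarrow>
     (let g = n div r; k = n - g * a - h in
      0 < r \<and> r dvd n \<and> 0 < a \<and> 0 < h \<and> 0 < g \<and> g * a + h < g * r \<and>
      linear_code n k C \<and>
      (\<exists>A D.
         C = {v \<in> vecs n. \<forall>row < g * a + h. (\<Sum>j<n. lrc_H g r h a A D row j * v j) = 0} \<and>
         (\<forall>i<g. linear_code r a (row_space a r (A i)) \<and>
                min_dist r (row_space a r (A i)) (r - a + 1)) \<and>
         (\<forall>S. S \<subseteq> {..<n} \<and> card S = g * a + h \<and>
              (\<forall>i<g. card {j\<in>S. j div r = i} \<ge> a) \<longrightarrow>
              cols_indep (g * a + h) (lrc_H g r h a A D) S)))"

end

(* Inside the field with l = q ^ (m * nu) elements, nu = min h g, let K and E be the subfields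
   of order q and q ^ m, i.e. the fixed points of x ^ q and of x ^ (q ^ m). The local parity
   checks are Reed-Solomon: rows theta_j ^ s for distinct theta_j in K. The h heavy rows are the
   Frobenius powers gamma_k ^ (q ^ s), where the column k at position j of group i carries
   gamma_k = alpha_i * beta_j with beta_j = sum_t theta_j ^ t * mu_t for K-independent mu_t in E
   and alpha_i = sum_s xi_i ^ s * omega_s for distinct xi_i in E and E-independent omega_s.

   Let c be a dependency among the columns of an admissible set S. A Frobenius descent reduces
   to coefficients in K: normalising one coefficient to 1, the differences c - c ^ q satisfy the
   local checks and one heavy check fewer on a support with fewer surplus columns (beyond a per
   group). With coefficients in K the first heavy check sum_k c_k gamma_k = 0 splits: the at
   most nu groups with more than a columns have E-independent alpha_i (Vandermonde in the xi_i),
   and within such a group the beta_j are K-independent (Vandermonde in the theta_j, as the group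
   has at most min r (a + h) <= m columns); the other groups are killed by the local checks. *)

theory Submission
  imports Defs "HOL-Number_Theory.Residues" "HOL-Computational_Algebra.Polynomial"
begin

lemma card_zeros_power_sum_less:
  fixes \<theta> :: "'b \<Rightarrow> 'a::field"
  assumes inj: "inj_on \<theta> T" and nonzero: "\<exists>t<a. y t \<noteq> 0"
  shows "card {j\<in>T. (\<Sum>t<a. y t * \<theta> j ^ t) = 0} < a"
proof -
  define p where "p = (\<Sum>t<a. monom (y t) t)"
  have poly_p: "poly p x = (\<Sum>t<a. y t * x ^ t)" for x
    by (simp add: p_def poly_sum poly_monom)
  have "coeff p t = y t" if "t < a" for t
    using that by (simp add: p_def coeff_sum)
  then have p0: "p \<noteq> 0"
    using nonzero by auto
  have "degree p \<le> a - 1"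
    unfolding p_def by (intro degree_sum_le) (auto intro: order.trans[OF degree_monom_le])
  moreover have "a > 0"
    using nonzero by auto
  ultimately have deg: "degree p < a"
    by linarith
  let ?Z = "{j\<in>T. (\<Sum>t<a. y t * \<theta> j ^ t) = 0}"
  have "card ?Z = card (\<theta> ` ?Z)"
    by (rule card_image[symmetric]) (rule inj_on_subset[OF inj], auto)
  also have "\<dots> \<le> card {x. poly p x = 0}"
    by (intro card_mono poly_roots_finite p0) (auto simp: poly_p)
  also have "\<dots> \<le> degree p"
    by (rule card_poly_roots_bound[OF p0])
  finally show ?thesis
    using deg by linarith
qed

lemma vandermonde_cols_independent:
  fixes \<theta> :: "'b \<Rightarrow> 'a::field"
  assumes fin: "finite T" and inj: "inj_on \<theta> T" and card: "card T \<le> M"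
    and eq: "\<forall>t<M. (\<Sum>j\<in>T. x j * \<theta> j ^ t) = 0"
  shows "\<forall>j\<in>T. x j = 0"
proof
  fix j0 assume j0: "j0 \<in> T"
  define p where "p = (\<Prod>j\<in>T-{j0}. [:-\<theta> j, 1:])"
  have "degree p \<le> card (T - {j0})"
    unfolding p_def using degree_prod_sum_le[of "T-{j0}" "\<lambda>j. [:-\<theta> j, 1:]"] fin
    by (simp add: o_def)
  also have "\<dots> < M"
    using card j0 fin by (metis card_Diff1_less order_less_le_trans)
  finally have deg: "degree p < M" .
  have "(\<Sum>j\<in>T. x j * poly p (\<theta> j)) = (\<Sum>i\<le>degree p. coeff p i * (\<Sum>j\<in>T. x j * \<theta> j ^ i))"
    by (simp add: poly_altdef sum_distrib_left mult_ac sum.swap[of _ T])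
  also have "\<dots> = 0"
    using deg eq by simp
  finally have sum0: "(\<Sum>j\<in>T. x j * poly p (\<theta> j)) = 0" .
  have poly_p: "poly p (\<theta> j) = (\<Prod>j'\<in>T-{j0}. \<theta> j - \<theta> j')" for j
    unfolding p_def by (simp add: poly_prod)
  have "poly p (\<theta> j) = 0" if "j \<in> T - {j0}" for j
    unfolding poly_p using that fin by (intro prod_zero) auto
  then have "(\<Sum>j\<in>T. x j * poly p (\<theta> j)) = x j0 * poly p (\<theta> j0)"
    using j0 fin by (subst sum.remove[OF fin j0]) (simp add: sum.neutral)
  moreover have "poly p (\<theta> j0) \<noteq> 0"
    using inj j0 fin by (auto simp: poly_p inj_on_def)
  ultimately show "x j0 = 0"
    using sum0 by simp
qed

(* finite_field_power_card_eq_same in HOL-Computational_Algebra needs the class finite_field. *)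
lemma finite_field_power_card:
  fixes x :: "'a::{finite,field}"
  shows "x ^ CARD('a) = x"
proof (cases "x = 0")
  case False
  define U where "U = UNIV - {0::'a}"
  have "bij_betw ((*) x) U U"
    unfolding U_def by (rule bij_betw_byWitness[where f' = "\<lambda>y. y / x"]) (use False in auto)
  then have "(\<Prod>y\<in>U. x * y) = \<Prod>U"
    by (rule prod.reindex_bij_betw)
  then have "x ^ card U * \<Prod>U = 1 * \<Prod>U"
    by (simp add: prod.distrib)
  moreover have "\<Prod>U \<noteq> 0"
    by (simp add: U_def)
  ultimately have "x ^ card U = 1"
    by (simp only: mult_cancel_right) simp
  moreover have "CARD('a) = Suc (card U)"
    unfolding U_def by (simp add: card_Diff_singleton Suc_diff_1 finite_UNIV_card_ge_0)
  ultimately show ?thesis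
    by (simp only: power_Suc) simp
qed (simp add: finite_UNIV_card_ge_0)

lemma CHAR_finite_field:
  assumes p: "prime p" and card: "CARD('a::{finite,field}) = p ^ e" and e: "0 < e"
  shows "CHAR('a) = p"
proof -
  have prime_char: "prime CHAR('a)"
    by (intro prime_CHAR_semidom finite_imp_CHAR_pos) simp
  have "CHAR('a) dvd p ^ e"
    using CHAR_dvd_CARD[where 'a='a] card by simp
  then have "CHAR('a) dvd p"
    using prime_char prime_dvd_power by blast
  then show ?thesis
    using prime_char p primes_dvd_imp_eq by blast
qed

lemma card_power_fixed_points_le:
  fixes Q :: nat
  assumes Q: "1 < Q"
  shows "card {x::'a::field. x ^ Q = x} \<le> Q"
proof -
  define P :: "'a poly" where "P = monom 1 Q - [:0, 1:]"
  have "coeff P Q = 1"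
    using Q by (simp add: P_def coeff_monom coeff_pCons split: nat.split)
  then have P0: "P \<noteq> 0"
    by auto
  have "degree P \<le> Q"
    unfolding P_def using Q
    by (intro order.trans[OF degree_diff_le_max]) (auto simp: degree_monom_eq degree_pCons_eq_if)
  moreover have "{x::'a. x ^ Q = x} = {x. poly P x = 0}"
    by (auto simp: P_def poly_monom)
  ultimately show ?thesis
    using card_poly_roots_bound[OF P0] by simp
qed

lemma power_eq_Suc_mult_geometric_sum:
  fixes Q :: nat
  assumes "1 \<le> Q"
  shows "Q ^ D = Suc ((Q - 1) * (\<Sum>u<D. Q ^ u))"
proof -
  have "int (Suc ((Q - 1) * (\<Sum>u<D. Q ^ u))) = 1 + (int Q - 1) * (\<Sum>u<D. int Q ^ u)"
    using assms by (simp add: of_nat_diff)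
  also have "\<dots> = int (Q ^ D)"
    using power_diff_1_eq[of "int Q" D] by simp
  finally show ?thesis
    by (simp only: of_nat_eq_iff)
qed

text \<open>Every element of a field with \<open>Q\<^sup>D\<close> elements is a root of \<open>X\<^sup>Q - X\<close> or of the cofactor
  \<open>f = \<Sum>u<R. X\<^bsup>(Q-1)u\<^esup>\<close> in \<open>X\<^bsup>Q\<^sup>D\<^esup> - X = (X\<^sup>Q - X) f\<close>, and \<open>f\<close> has at most \<open>Q\<^sup>D - Q\<close> roots.\<close>

lemma card_power_fixed_points_ge:
  fixes Q :: nat
  assumes card: "CARD('a::{finite,field}) = Q ^ D" and D: "0 < D" and Q: "1 < Q"
  shows "Q \<le> card {x::'a. x ^ Q = x}"
proof -
  define d R where "d = Q - 1" and "R = (\<Sum>u<D. Q ^ u)"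
  have QD: "Q ^ D = Suc (d * R)"
    unfolding d_def R_def using Q by (intro power_eq_Suc_mult_geometric_sum) simp
  have "R \<ge> 1"
    unfolding R_def using D by (simp add: sum.remove[of _ 0])
  define f :: "'a poly" where "f = (\<Sum>u<R. monom 1 (d * u))"
  have poly_f: "poly f x = (\<Sum>u<R. (x ^ d) ^ u)" for x
    by (simp add: f_def poly_sum poly_monom power_mult)
  have "poly f 0 = 1"
    using \<open>R \<ge> 1\<close> Q by (simp add: poly_f d_def sum.remove[of _ 0] power_0_left)
  then have f0: "f \<noteq> 0"
    by auto
  have "degree f \<le> d * (R - 1)"
    unfolding f_def
    by (intro degree_sum_le) (auto intro!: order.trans[OF degree_monom_le] mult_le_mono2)
  also have "\<dots> = Q ^ D - Q"
    using QD Q by (simp add: d_def diff_mult_distrib2)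
  finally have deg: "degree f \<le> Q ^ D - Q" .
  have "x ^ Q = x \<or> poly f x = 0" for x :: 'a
  proof -
    have "x ^ Q - x = x * (x ^ d - 1)"
      using Q by (simp add: d_def algebra_simps flip: power_Suc)
    then have "(x ^ Q - x) * poly f x = x * ((x ^ d) ^ R - 1)"
      by (simp add: poly_f power_diff_1_eq)
    also have "\<dots> = x ^ CARD('a) - x"
      by (simp only: card QD power_Suc power_mult right_diff_distrib mult_1_right)
    finally show ?thesis
      by (simp add: finite_field_power_card)
  qed
  then have "UNIV = {x::'a. x ^ Q = x} \<union> {x. poly f x = 0}"
    by auto
  then have "Q ^ D \<le> card {x::'a. x ^ Q = x} + card {x. poly f x = 0}"
    using card card_Un_le by metis
  moreover have "card {x. poly f x = 0} \<le> Q ^ D - Q"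
    using card_poly_roots_bound[OF f0] deg by simp
  moreover have "Q \<le> Q ^ D"
    using D Q by (simp add: self_le_power)
  ultimately show ?thesis
    by linarith
qed

lemma card_power_fixed_points:
  fixes Q :: nat
  assumes "CARD('a::{finite,field}) = Q ^ D" "0 < D" "1 < Q"
  shows "card {x::'a. x ^ Q = x} = Q"
  by (rule antisym[OF card_power_fixed_points_le[OF assms(3)] card_power_fixed_points_ge[OF assms]])

definition is_subfield :: "'a::field set \<Rightarrow> bool" where
  "is_subfield E \<longleftrightarrow> 0 \<in> E \<and> 1 \<in> E \<and> (\<forall>x\<in>E. \<forall>y\<in>E. x + y \<in> E \<and> x * y \<in> E) \<and>
     (\<forall>x\<in>E. - x \<in> E \<and> inverse x \<in> E)"

context
  fixes E :: "'a::field set"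
  assumes E: "is_subfield E"
begin

lemma subfield_mult: "x \<in> E \<Longrightarrow> y \<in> E \<Longrightarrow> x * y \<in> E"
  using E by (simp add: is_subfield_def)

lemma subfield_power: "x \<in> E \<Longrightarrow> x ^ n \<in> E"
  using E by (induction n) (simp_all add: is_subfield_def)

lemma subfield_divide: "x \<in> E \<Longrightarrow> y \<in> E \<Longrightarrow> x / y \<in> E"
  using E by (simp add: is_subfield_def divide_inverse)

lemma subfield_uminus: "x \<in> E \<Longrightarrow> - x \<in> E"
  using E by (simp add: is_subfield_def)

lemma subfield_sum: "(\<And>i. i \<in> A \<Longrightarrow> f i \<in> E) \<Longrightarrow> sum f A \<in> E"
  using E by (induction A rule: infinite_finite_induct) (simp_all add: is_subfield_def)

lemma card_subfield_ge_2: "finite E \<Longrightarrow> 2 \<le> card E"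
  using E card_mono[of E "{0, 1}"] by (simp add: is_subfield_def)

end

lemma power_fixed_points_subfield:
  fixes Q :: nat
  assumes add: "\<And>x y :: 'a::field. (x + y) ^ Q = x ^ Q + y ^ Q" and Q: "0 < Q"
  shows "is_subfield {x::'a. x ^ Q = x}"
proof -
  have neg: "(- x) ^ Q = - (x ^ Q)" for x :: 'a
  proof -
    have "0 = (x + - x) ^ Q"
      using Q by simp
    also have "\<dots> = x ^ Q + (- x) ^ Q"
      by (rule add)
    finally show ?thesis
      by (simp add: eq_neg_iff_add_eq_0 add.commute)
  qed
  show ?thesis
    unfolding is_subfield_def using add Q by (auto simp: neg power_mult_distrib power_inverse)
qed

lemma power_fixed_power_power: "(x::'a::monoid_mult) ^ q = x \<Longrightarrow> x ^ (q ^ u) = x"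
  by (induction u) (simp_all add: power_mult)

definition independent_over :: "'a::field set \<Rightarrow> (nat \<Rightarrow> 'a) \<Rightarrow> nat \<Rightarrow> bool" where
  "independent_over E b k \<longleftrightarrow>
     (\<forall>c. (\<forall>t<k. c t \<in> E) \<longrightarrow> (\<Sum>t<k. c t * b t) = 0 \<longrightarrow> (\<forall>t<k. c t = 0))"

lemma independent_overD:
  "independent_over E b k \<Longrightarrow> (\<And>t. t < k \<Longrightarrow> c t \<in> E) \<Longrightarrow> (\<Sum>t<k. c t * b t) = 0 \<Longrightarrow> t < k \<Longrightarrow> c t = 0"
  unfolding independent_over_def by blast

lemma independent_over_extend:
  assumes E: "is_subfield E" and b: "independent_over E b k"
    and u: "\<And>c. \<forall>t<k. c t \<in> E \<Longrightarrow> u \<noteq> (\<Sum>t<k. c t * b t)"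
  shows "independent_over E (b(k := u)) (Suc k)"
  unfolding independent_over_def
proof (rule allI, intro impI)
  fix c assume cE: "\<forall>t<Suc k. c t \<in> E" and "(\<Sum>t<Suc k. c t * (b(k := u)) t) = 0"
  then have sum0: "(\<Sum>t<k. c t * b t) + c k * u = 0"
    by simp
  have "c k = 0"
  proof (rule ccontr)
    assume ck: "c k \<noteq> 0"
    have "c k * u = - (\<Sum>t<k. c t * b t)"
      using sum0 by (simp add: eq_neg_iff_add_eq_0 add.commute)
    then have "u = - (\<Sum>t<k. c t * b t) / c k"
      using ck by (metis nonzero_mult_div_cancel_left)
    also have "\<dots> = (\<Sum>t<k. (- c t / c k) * b t)"
      by (simp add: sum_divide_distrib sum_negf)
    finally have "u = (\<Sum>t<k. (- c t / c k) * b t)" .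
    moreover have "\<forall>t<k. - c t / c k \<in> E"
      using cE by (simp add: subfield_divide[OF E] subfield_uminus[OF E])
    ultimately show False
      using u[of "\<lambda>t. - c t / c k"] by simp
  qed
  with sum0 b cE show "\<forall>t<Suc k. c t = 0"
    by (auto simp: independent_over_def less_Suc_eq)
qed

lemma exists_outside_span:
  assumes E: "finite E" and U: "finite U" and card: "card E ^ k < card U"
  shows "\<exists>u\<in>U. \<forall>c. (\<forall>t<k. c t \<in> E) \<longrightarrow> u \<noteq> (\<Sum>t<k. c t * b t)"
proof -
  define span where "span = (\<lambda>c. \<Sum>t<k. c t * b t) ` ({..<k} \<rightarrow>\<^sub>E E)"
  have "card span \<le> card E ^ k"
    unfolding span_def using card_image_le[of "{..<k} \<rightarrow>\<^sub>E E"] E by (simp add: card_PiE finite_PiE)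
  moreover have "finite span"
    unfolding span_def using E by (simp add: finite_PiE)
  ultimately obtain u where "u \<in> U" "u \<notin> span"
    using card card_mono[of span U] by force
  moreover have "(\<Sum>t<k. c t * b t) \<in> span" if "\<forall>t<k. c t \<in> E" for c
  proof -
    have "(\<Sum>t<k. c t * b t) = (\<lambda>c. \<Sum>t<k. c t * b t) (restrict c {..<k})"
      by simp
    moreover have "restrict c {..<k} \<in> {..<k} \<rightarrow>\<^sub>E E"
      using that by simp
    ultimately show ?thesis
      unfolding span_def by (rule image_eqI)
  qed
  ultimately show ?thesis
    by metis
qed

lemma exists_independent_over:
  assumes E: "is_subfield E" "finite E" and U: "finite U" and card: "card E ^ N \<le> card U"
  shows "\<exists>b. (\<forall>t<N. b t \<in> U) \<and> independent_over E b N"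
proof -
  have "\<exists>b. (\<forall>t<k. b t \<in> U) \<and> independent_over E b k" if "k \<le> N" for k
    using that
  proof (induction k)
    case 0
    show ?case
      by (simp add: independent_over_def)
  next
    case (Suc k)
    then obtain b where bU: "\<forall>t<k. b t \<in> U" and b: "independent_over E b k"
      by auto
    have "card E ^ k < card E ^ N"
      using Suc.prems card_subfield_ge_2[OF E] by (intro power_strict_increasing) auto
    then obtain u where "u \<in> U" and u: "\<forall>c. (\<forall>t<k. c t \<in> E) \<longrightarrow> u \<noteq> (\<Sum>t<k. c t * b t)"
      using exists_outside_span[OF E(2) U, of k b] card by auto
    then have "independent_over E (b(k := u)) (Suc k)"
      by (intro independent_over_extend[OF E(1) b]) blast
    moreover have "\<forall>t<Suc k. (b(k := u)) t \<in> U"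
      using bU \<open>u \<in> U\<close> by (simp add: less_Suc_eq)
    ultimately show ?case
      by blast
  qed
  then show ?thesis
    by blast
qed

definition subspace_vecs :: "nat \<Rightarrow> (nat \<Rightarrow> 'a::field) set \<Rightarrow> bool" where
  "subspace_vecs n C \<longleftrightarrow> C \<subseteq> vecs n \<and> (\<lambda>_. 0) \<in> C \<and>
     (\<forall>u\<in>C. \<forall>v\<in>C. (\<lambda>i. u i + v i) \<in> C) \<and> (\<forall>c. \<forall>v\<in>C. (\<lambda>i. c * v i) \<in> C)"

lemma linear_code_subspace: "linear_code n k C \<Longrightarrow> subspace_vecs n C"
  by (simp add: linear_code_def subspace_vecs_def)

lemma linear_codeI:
  assumes "subspace_vecs n C" and "\<forall>t<k. b t \<in> C"
    and "\<And>c. \<forall>i. (\<Sum>t<k. c t * b t i) = 0 \<Longrightarrow> \<forall>t<k. c t = 0"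
    and "\<And>v. v \<in> C \<Longrightarrow> \<exists>c. \<forall>i. v i = (\<Sum>t<k. c t * b t i)"
  shows "linear_code n k C"
  using assms unfolding linear_code_def subspace_vecs_def by blast

lemma subspace_sum_mem:
  fixes K :: nat and b :: "nat \<Rightarrow> nat \<Rightarrow> 'a::field"
  assumes C: "subspace_vecs n C" and b: "\<forall>t<K. b t \<in> C"
  shows "(\<lambda>i. \<Sum>t<K. c t * b t i) \<in> C"
  using b
proof (induction K)
  case 0
  then show ?case
    using C by (simp add: subspace_vecs_def)
next
  case (Suc K)
  then have "(\<lambda>i. \<Sum>t<K. c t * b t i) \<in> C" and "(\<lambda>i. c K * b K i) \<in> C"
    using C by (auto simp: subspace_vecs_def)
  then show ?case
    using C by (simp add: subspace_vecs_def)
qed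

lemma linear_code_systematic:
  fixes b :: "nat \<Rightarrow> nat \<Rightarrow> 'a::field"
  assumes C: "subspace_vecs n C" and b: "\<forall>t<k. b t \<in> C"
    and unit: "\<And>t t'. t < k \<Longrightarrow> t' < k \<Longrightarrow> b t (e t') = (if t = t' then 1 else 0)"
    and determined: "\<And>v. v \<in> C \<Longrightarrow> \<forall>t<k. v (e t) = 0 \<Longrightarrow> v = (\<lambda>_. 0)"
  shows "linear_code n k C"
proof (rule linear_codeI[OF C b])
  have coord: "(\<Sum>t<k. c t * b t (e t')) = c t'" if "t' < k" for c t'
  proof -
    have "(\<Sum>t<k. c t * b t (e t')) = (\<Sum>t<k. if t = t' then c t else 0)"
      using that by (intro sum.cong) (simp_all add: unit)
    then show ?thesis
      using that by simp
  qed
  show "\<forall>t<k. c t = 0" if "\<forall>i. (\<Sum>t<k. c t * b t i) = 0" for c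
    using that coord by metis
  show "\<exists>c. \<forall>i. v i = (\<Sum>t<k. c t * b t i)" if v: "v \<in> C" for v
  proof -
    define w where "w i = (\<Sum>t<k. (- v (e t)) * b t i)" for i
    have "w \<in> C"
      unfolding w_def by (rule subspace_sum_mem[OF C b])
    then have "(\<lambda>i. v i + w i) \<in> C"
      using C v unfolding subspace_vecs_def by blast
    moreover have "\<forall>t<k. v (e t) + w (e t) = 0"
    proof (intro allI impI)
      fix t assume "t < k"
      have "w (e t) = - v (e t)"
        unfolding w_def by (rule coord[OF \<open>t < k\<close>])
      then show "v (e t) + w (e t) = 0"
        by simp
    qed
    ultimately have "(\<lambda>i. v i + w i) = (\<lambda>_. 0)"
      by (rule determined)
    then have "w i = - v i" for i
      by (metis add_eq_0_iff)
    then have "\<forall>i. v i = (\<Sum>t<k. v (e t) * b t i)"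
      by (simp add: w_def sum_negf)
    then show ?thesis
      by (rule exI[of _ "\<lambda>t. v (e t)"])
  qed
qed

definition span_vecs :: "nat \<Rightarrow> (nat \<Rightarrow> nat \<Rightarrow> 'a::field) \<Rightarrow> (nat \<Rightarrow> 'a) set" where
  "span_vecs k b = {v. \<exists>c. \<forall>i. v i = (\<Sum>t<k. c t * b t i)}"

lemma linear_code_span_vecs:
  assumes b: "\<forall>t<k. b t \<in> vecs n"
    and indep: "\<And>c. \<forall>i. (\<Sum>t<k. c t * b t i) = 0 \<Longrightarrow> \<forall>t<k. c t = 0"
  shows "linear_code n k (span_vecs k b)"
proof (rule linear_codeI[OF _ _ indep])
  have "(\<lambda>i. u i + v i) \<in> span_vecs k b" if "u \<in> span_vecs k b" "v \<in> span_vecs k b" for u v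
  proof -
    from that obtain cu cv where "\<forall>i. u i = (\<Sum>t<k. cu t * b t i)" "\<forall>i. v i = (\<Sum>t<k. cv t * b t i)"
      unfolding span_vecs_def by blast
    then show ?thesis
      unfolding span_vecs_def by (intro CollectI exI[of _ "\<lambda>t. cu t + cv t"]) (simp add: distrib_right sum.distrib)
  qed
  moreover have "(\<lambda>i. c * v i) \<in> span_vecs k b" if "v \<in> span_vecs k b" for c v
  proof -
    from that obtain cv where "\<forall>i. v i = (\<Sum>t<k. cv t * b t i)"
      unfolding span_vecs_def by blast
    then show ?thesis
      unfolding span_vecs_def by (intro CollectI exI[of _ "\<lambda>t. c * cv t"]) (simp add: sum_distrib_left mult.assoc)
  qed
  moreover have "span_vecs k b \<subseteq> vecs n"
    using b by (auto simp: span_vecs_def vecs_def)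
  moreover have "(\<lambda>_. 0) \<in> span_vecs k b"
    unfolding span_vecs_def by (intro CollectI exI[of _ "\<lambda>_. 0"]) simp
  ultimately show "subspace_vecs n (span_vecs k b)"
    by (simp add: subspace_vecs_def)
  have "b t i = (\<Sum>t'<k. (if t' = t then 1 else 0) * b t' i)" if "t < k" for t i
  proof -
    have "(\<Sum>t'<k. (if t' = t then 1 else 0) * b t' i) = (\<Sum>t'<k. if t' = t then b t i else 0)"
      by (intro sum.cong) auto
    then show ?thesis
      using that by simp
  qed
  then show "\<forall>t<k. b t \<in> span_vecs k b"
    unfolding span_vecs_def by (intro allI impI CollectI exI[of _ "\<lambda>t'. if t' = _ then 1 else 0"])
  show "\<exists>c. \<forall>i. v i = (\<Sum>t<k. c t * b t i)" if "v \<in> span_vecs k b" for v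
    using that by (simp add: span_vecs_def)
qed

lemma row_space_eq_span_vecs: "row_space a r M = span_vecs a (\<lambda>t j. if j < r then M t j else 0)"
proof -
  have "(\<Sum>t<a. c t * (if j < r then M t j else 0)) = (if j < r then (\<Sum>t<a. c t * M t j) else 0)" for c j
    by simp
  then show ?thesis
    by (simp add: row_space_def span_vecs_def)
qed

lemma linear_code_row_space:
  assumes indep: "\<And>c. \<forall>j<r. (\<Sum>t<a. c t * M t j) = 0 \<Longrightarrow> \<forall>t<a. c t = 0"
  shows "linear_code r a (row_space a r M)"
  unfolding row_space_eq_span_vecs
proof (rule linear_code_span_vecs)
  show "\<forall>t<a. (\<lambda>j. if j < r then M t j else 0) \<in> vecs r"
    by (simp add: vecs_def)
  show "\<forall>t<a. c t = 0" if "\<forall>j. (\<Sum>t<a. c t * (if j < r then M t j else 0)) = 0" for c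
  proof (rule indep, intro allI impI)
    fix j assume "j < r"
    then show "(\<Sum>t<a. c t * M t j) = 0"
      using that[rule_format, of j] by simp
  qed
qed

definition null_space :: "nat \<Rightarrow> nat \<Rightarrow> (nat \<Rightarrow> nat \<Rightarrow> 'a::field) \<Rightarrow> (nat \<Rightarrow> 'a) set" where
  "null_space n N H = {v \<in> vecs n. \<forall>row<N. (\<Sum>j<n. H row j * v j) = 0}"

lemma subspace_null_space: "subspace_vecs n (null_space n N H)"
proof -
  have "(\<Sum>j<n. H row j * (c * v j)) = c * (\<Sum>j<n. H row j * v j)" for row c v
    by (simp add: sum_distrib_left mult_ac)
  then show ?thesis
    by (auto simp: subspace_vecs_def null_space_def vecs_def algebra_simps sum.distrib)
qed

lemma cols_indepD:
  "cols_indep N H S \<Longrightarrow> (\<And>row. row < N \<Longrightarrow> (\<Sum>j\<in>S. c j * H row j) = 0) \<Longrightarrow> j \<in> S \<Longrightarrow> c j = 0"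
  unfolding cols_indep_def by blast

lemma cols_indep_solvable:
  fixes H :: "nat \<Rightarrow> nat \<Rightarrow> 'a::{finite,field}"
  assumes S: "finite S" "card S = N" and indep: "cols_indep N H S"
  shows "\<exists>x. \<forall>row<N. (\<Sum>j\<in>S. x j * H row j) = y row"
proof -
  define \<Phi> where "\<Phi> x = (\<lambda>row\<in>{..<N}. \<Sum>j\<in>S. x j * H row j)" for x
  have "inj_on \<Phi> (S \<rightarrow>\<^sub>E UNIV)"
  proof (rule inj_onI)
    fix x x' assume x: "x \<in> S \<rightarrow>\<^sub>E UNIV" and x': "x' \<in> S \<rightarrow>\<^sub>E UNIV" and eq: "\<Phi> x = \<Phi> x'"
    have "(\<Sum>j\<in>S. (x j - x' j) * H row j) = 0" if "row < N" for row
      using fun_cong[OF eq, of row] that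
      by (simp add: \<Phi>_def algebra_simps sum_subtractf)
    then have "x j - x' j = 0" if "j \<in> S" for j
      using cols_indepD[OF indep, where c = "\<lambda>j. x j - x' j"] that by simp
    then show "x = x'"
      using x x' by (intro PiE_ext) auto
  qed
  moreover have img: "\<Phi> ` (S \<rightarrow>\<^sub>E UNIV) \<subseteq> {..<N} \<rightarrow>\<^sub>E UNIV"
    unfolding \<Phi>_def by (intro image_subsetI) (simp add: PiE_iff)
  moreover have "card (S \<rightarrow>\<^sub>E (UNIV :: 'a set)) = card ({..<N} \<rightarrow>\<^sub>E (UNIV :: 'a set))"
    using S by (simp add: card_PiE)
  ultimately have "\<Phi> ` (S \<rightarrow>\<^sub>E UNIV) = {..<N} \<rightarrow>\<^sub>E UNIV"
    by (intro card_subset_eq) (simp_all add: finite_PiE card_image)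
  moreover have "restrict y {..<N} \<in> {..<N} \<rightarrow>\<^sub>E UNIV"
    by simp
  ultimately obtain x where x: "restrict y {..<N} = \<Phi> x"
    by blast
  have "(\<Sum>j\<in>S. x j * H row j) = y row" if "row < N" for row
    using fun_cong[OF x, of row] that by (simp add: \<Phi>_def)
  then show ?thesis
    by blast
qed

lemma null_space_completion_mem:
  assumes S: "S \<subseteq> {..<n}" and f: "f < n" "f \<notin> S"
    and x: "\<forall>row<N. (\<Sum>j\<in>S. x j * H row j) = - H row f"
  shows "(\<lambda>j. if j = f then 1 else if j \<in> S then x j else 0) \<in> null_space n N H"
    (is "?b \<in> _")
proof -
  have fin: "finite S"
    using S finite_subset by blast
  have "(\<Sum>j<n. H row j * ?b j) = 0" if "row < N" for row
  proof -
    have "(\<Sum>j<n. H row j * ?b j) = (\<Sum>j\<in>insert f S. H row j * ?b j)"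
      by (rule sum.mono_neutral_right) (use S f in auto)
    also have "\<dots> = H row f + (\<Sum>j\<in>S. H row j * ?b j)"
      using f fin by simp
    also have "(\<Sum>j\<in>S. H row j * ?b j) = (\<Sum>j\<in>S. x j * H row j)"
      using f by (intro sum.cong) auto
    finally show ?thesis
      using x that by simp
  qed
  moreover have "?b \<in> vecs n"
    using S f by (auto simp: vecs_def)
  ultimately show ?thesis
    by (simp add: null_space_def)
qed

lemma null_space_eq_zero:
  assumes indep: "cols_indep N H S" and S: "S \<subseteq> {..<n}"
    and v: "v \<in> null_space n N H" and off: "\<And>j. j < n \<Longrightarrow> j \<notin> S \<Longrightarrow> v j = 0"
  shows "v = (\<lambda>_. 0)"
proof -
  have off': "v j = 0" if "j \<notin> S" for j
    using off v that by (cases "j < n") (auto simp: null_space_def vecs_def)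
  have checks: "(\<Sum>j\<in>S. v j * H row j) = 0" if "row < N" for row
  proof -
    have "(\<Sum>j\<in>S. v j * H row j) = (\<Sum>j<n. H row j * v j)"
      by (rule sum.mono_neutral_cong_left) (use S off' in \<open>auto simp: mult.commute\<close>)
    then show ?thesis
      using v that by (simp add: null_space_def)
  qed
  have "v j = 0" if "j \<in> S" for j
    by (rule cols_indepD[OF indep checks that])
  then show ?thesis
    using off' by auto
qed

lemma linear_code_null_space:
  fixes H :: "nat \<Rightarrow> nat \<Rightarrow> 'a::{finite,field}"
  assumes S: "S \<subseteq> {..<n}" "card S = N" and indep: "cols_indep N H S"
  shows "linear_code n (n - N) (null_space n N H)"
proof -
  have fin: "finite S"
    using S(1) finite_subset by blast
  have "card ({..<n} - S) = n - N"
    using S fin by (simp add: card_Diff_subset)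
  then obtain e where e: "bij_betw e {..<n - N} ({..<n} - S)"
    using ex_bij_betw_nat_finite[of "{..<n} - S"] by (auto simp: atLeast0LessThan)
  then have e_out: "e t \<notin> S" "e t < n" if "t < n - N" for t
    using that by (auto simp: bij_betw_def)
  have e_inj: "e t = e t' \<longleftrightarrow> t = t'" if "t < n - N" "t' < n - N" for t t'
    using e that by (auto simp: bij_betw_def inj_on_def)
  have "\<forall>f. \<exists>x. \<forall>row<N. (\<Sum>j\<in>S. x j * H row j) = - H row f"
    by (intro allI cols_indep_solvable[OF fin S(2) indep])
  then obtain x where x: "\<forall>f. \<forall>row<N. (\<Sum>j\<in>S. x f j * H row j) = - H row f"
    by (rule choice[THEN exE])
  define b where "b t j = (if j = e t then 1 else if j \<in> S then x (e t) j else 0)" for t j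
  show ?thesis
  proof (rule linear_code_systematic[OF subspace_null_space, where b = b and e = e])
    show "\<forall>t<n - N. b t \<in> null_space n N H"
      unfolding b_def using S(1) e_out x by (blast intro: null_space_completion_mem)
    show "b t (e t') = (if t = t' then 1 else 0)" if "t < n - N" "t' < n - N" for t t'
      using e_out[OF that(2)] e_inj[OF that] by (auto simp: b_def)
    show "v = (\<lambda>_. 0)" if "v \<in> null_space n N H" "\<forall>t<n - N. v (e t) = 0" for v
    proof (rule null_space_eq_zero[OF indep S(1) that(1)])
      fix j assume "j < n" "j \<notin> S"
      then have "j \<in> e ` {..<n - N}"
        using e by (auto simp: bij_betw_def)
      then show "v j = 0"
        using that(2) by auto
    qed
  qed
qed

lemma exists_codeword_vanishing_prefix:
  fixes C :: "(nat \<Rightarrow> 'a::{finite,field}) set"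
  assumes C: "linear_code r k C" and k: "0 < k"
  shows "\<exists>v\<in>C. v \<noteq> (\<lambda>_. 0) \<and> (\<forall>j<k - 1. v j = 0)"
proof -
  from C obtain b where bC: "\<forall>t<k. b t \<in> C"
    and b_indep: "\<forall>c. (\<forall>i. (\<Sum>t<k. c t * b t i) = 0) \<longrightarrow> (\<forall>t<k. c t = 0)"
    unfolding linear_code_def by blast
  define \<Phi> where "\<Phi> c = (\<lambda>j\<in>{..<k-1}. \<Sum>t<k. c t * b t j)" for c
  have "2 \<le> CARD('a)"
    using card_mono[of UNIV "{0::'a, 1}"] by simp
  then have "CARD('a) ^ (k - 1) < CARD('a) ^ k"
    using k by (intro power_strict_increasing) auto
  moreover have card_funs: "card ({..<j} \<rightarrow>\<^sub>E (UNIV :: 'a set)) = CARD('a) ^ j" for j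
    by (simp add: card_PiE)
  ultimately have "card ({..<k-1} \<rightarrow>\<^sub>E (UNIV :: 'a set)) < card ({..<k} \<rightarrow>\<^sub>E (UNIV :: 'a set))"
    by (simp only: card_funs)
  moreover have "\<Phi> ` ({..<k} \<rightarrow>\<^sub>E UNIV) \<subseteq> {..<k-1} \<rightarrow>\<^sub>E UNIV"
    unfolding \<Phi>_def by (intro image_subsetI) (simp add: PiE_iff)
  then have "card ({..<k} \<rightarrow>\<^sub>E (UNIV :: 'a set)) \<le> card ({..<k-1} \<rightarrow>\<^sub>E (UNIV :: 'a set))"
    if "inj_on \<Phi> ({..<k} \<rightarrow>\<^sub>E UNIV)"
    using card_inj_on_le[OF that] by (simp add: finite_PiE)
  ultimately have "\<not> inj_on \<Phi> ({..<k} \<rightarrow>\<^sub>E UNIV)"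
    by linarith
  then obtain c1 c2 where c12: "c1 \<in> {..<k} \<rightarrow>\<^sub>E UNIV" "c2 \<in> {..<k} \<rightarrow>\<^sub>E UNIV"
    and "c1 \<noteq> c2" and \<Phi>12: "\<Phi> c1 = \<Phi> c2"
    by (meson inj_onI)
  define v where "v i = (\<Sum>t<k. (c1 t - c2 t) * b t i)" for i
  have "v \<in> C"
    unfolding v_def by (rule subspace_sum_mem[OF linear_code_subspace[OF C] bC])
  moreover have "v \<noteq> (\<lambda>_. 0)"
  proof
    assume "v = (\<lambda>_. 0)"
    then have "\<forall>i. (\<Sum>t<k. (c1 t - c2 t) * b t i) = 0"
      by (simp add: v_def fun_eq_iff)
    then have "\<forall>t<k. c1 t = c2 t"
      using b_indep by force
    then have "c1 = c2"
      using c12 by (intro PiE_ext) auto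
    with \<open>c1 \<noteq> c2\<close> show False
      by contradiction
  qed
  moreover have "v j = 0" if "j < k - 1" for j
    using fun_cong[OF \<Phi>12, of j] that by (simp add: \<Phi>_def v_def algebra_simps sum_subtractf)
  ultimately show ?thesis
    by blast
qed

lemma singleton_bound:
  fixes C :: "(nat \<Rightarrow> 'a::{finite,field}) set"
  assumes C: "linear_code r k C" and d: "min_dist_ge r C d" and k: "0 < k" "k \<le> r"
  shows "d \<le> r - k + 1"
proof -
  obtain v where v: "v \<in> C" "v \<noteq> (\<lambda>_. 0)" and prefix: "\<forall>j<k - 1. v j = 0"
    using exists_codeword_vanishing_prefix[OF C k(1)] by blast
  have "{i. i < r \<and> v i \<noteq> 0} \<subseteq> {k-1..<r}"
    using prefix by (auto simp: not_less[symmetric])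
  then have "hweight r v \<le> card {k-1..<r}"
    unfolding hweight_def by (rule card_mono[OF finite_atLeastLessThan])
  moreover have "d \<le> hweight r v"
    using d v by (simp add: min_dist_ge_def)
  ultimately show ?thesis
    using k by simp
qed

lemma singleton_redundancy_bound:
  fixes C :: "(nat \<Rightarrow> 'a::{finite,field}) set"
  assumes "linear_code r (r - m) C" "min_dist_ge r C d" "m < r"
  shows "d \<le> m + 1"
  using singleton_bound[OF assms(1,2)] assms(3) by simp

lemma hweight_eq_diff_card_zeros: "hweight r v = r - card {j\<in>{..<r}. v j = 0}"
proof -
  have "{i. i < r \<and> v i \<noteq> 0} = {..<r} - {j\<in>{..<r}. v j = 0}"
    by auto
  moreover have "card ({..<r} - {j\<in>{..<r}. v j = 0}) = r - card {j\<in>{..<r}. v j = 0}"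
    by (subst card_Diff_subset) auto
  ultimately show ?thesis
    unfolding hweight_def by simp
qed

lemma mem_vandermonde_row_space:
  "v \<in> row_space a r (\<lambda>s j. \<theta> j ^ s) \<longleftrightarrow> (\<exists>c. \<forall>j. v j = (if j < r then (\<Sum>t<a. c t * \<theta> j ^ t) else 0))"
  by (simp add: row_space_def)

lemma linear_code_vandermonde_row_space:
  fixes \<theta> :: "nat \<Rightarrow> 'a::field"
  assumes inj: "inj_on \<theta> {..<r}" and a: "a \<le> r"
  shows "linear_code r a (row_space a r (\<lambda>s j. \<theta> j ^ s))"
proof (rule linear_code_row_space)
  fix c assume zero: "\<forall>j<r. (\<Sum>t<a. c t * \<theta> j ^ t) = 0"
  show "\<forall>t<a. c t = 0"
  proof (rule ccontr)
    assume "\<not> (\<forall>t<a. c t = 0)"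
    then have "card {j\<in>{..<r}. (\<Sum>t<a. c t * \<theta> j ^ t) = 0} < a"
      by (intro card_zeros_power_sum_less[OF inj]) auto
    moreover have "{j\<in>{..<r}. (\<Sum>t<a. c t * \<theta> j ^ t) = 0} = {..<r}"
      using zero by auto
    ultimately show False
      using a by simp
  qed
qed

lemma min_dist_ge_vandermonde_row_space:
  fixes \<theta> :: "nat \<Rightarrow> 'a::field"
  assumes inj: "inj_on \<theta> {..<r}" and a: "a \<le> r"
  shows "min_dist_ge r (row_space a r (\<lambda>s j. \<theta> j ^ s)) (r - a + 1)"
  unfolding min_dist_ge_def
proof (intro ballI impI)
  fix v assume "v \<in> row_space a r (\<lambda>s j. \<theta> j ^ s)" "v \<noteq> (\<lambda>_. 0)"
  then obtain c where c: "\<forall>j. v j = (if j < r then (\<Sum>t<a. c t * \<theta> j ^ t) else 0)"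
    unfolding mem_vandermonde_row_space by blast
  have "\<exists>t<a. c t \<noteq> 0"
  proof (rule ccontr)
    assume "\<not> (\<exists>t<a. c t \<noteq> 0)"
    then have "v = (\<lambda>_. 0)"
      using c by (simp add: fun_eq_iff)
    with \<open>v \<noteq> (\<lambda>_. 0)\<close> show False
      by contradiction
  qed
  then have "card {j\<in>{..<r}. (\<Sum>t<a. c t * \<theta> j ^ t) = 0} < a"
    by (rule card_zeros_power_sum_less[OF inj])
  moreover have "{j\<in>{..<r}. v j = 0} = {j\<in>{..<r}. (\<Sum>t<a. c t * \<theta> j ^ t) = 0}"
    using c by auto
  ultimately show "r - a + 1 \<le> hweight r v"
    using a by (simp add: hweight_eq_diff_card_zeros)
qed

lemma vandermonde_row_space_weight_attained:
  fixes \<theta> :: "nat \<Rightarrow> 'a::field"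
  assumes inj: "inj_on \<theta> {..<r}" and a: "0 < a" "a \<le> r"
  shows "\<exists>v\<in>row_space a r (\<lambda>s j. \<theta> j ^ s). v \<noteq> (\<lambda>_. 0) \<and> hweight r v = r - a + 1"
proof -
  define p where "p = (\<Prod>j<a-1. [:-\<theta> j, 1:])"
  have "degree p \<le> a - 1"
    using degree_prod_sum_le[of "{..<a-1}" "\<lambda>j. [:-\<theta> j, 1:]"] by (simp add: p_def o_def)
  then have poly_p: "poly p x = (\<Sum>t<a. coeff p t * x ^ t)" for x
    unfolding poly_altdef using a by (intro sum.mono_neutral_left) (auto simp: coeff_eq_0)
  define v where "v j = (if j < r then poly p (\<theta> j) else 0)" for j
  have "v \<in> row_space a r (\<lambda>s j. \<theta> j ^ s)"
    unfolding mem_vandermonde_row_space v_def poly_p by blast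
  have root_iff: "poly p (\<theta> j) = 0 \<longleftrightarrow> (\<exists>j'<a-1. \<theta> j = \<theta> j')" for j
    by (auto simp: p_def poly_prod)
  have "(\<exists>j'<a-1. \<theta> j = \<theta> j') \<longleftrightarrow> j < a - 1" if "j < r" for j
  proof
    assume "\<exists>j'<a-1. \<theta> j = \<theta> j'"
    then obtain j' where "j' < a - 1" "\<theta> j = \<theta> j'"
      by blast
    moreover from this have "j' < r"
      using a by linarith
    ultimately show "j < a - 1"
      using inj that by (auto dest: inj_onD)
  qed auto
  then have zeros: "{j\<in>{..<r}. v j = 0} = {..<a-1}"
    using a by (auto simp: v_def root_iff)
  have "a - 1 \<notin> {j\<in>{..<r}. v j = 0}"
    unfolding zeros by simp
  then have "v \<noteq> (\<lambda>_. 0)"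
    using a by auto
  moreover have "hweight r v = r - a + 1"
    unfolding hweight_eq_diff_card_zeros zeros using a by simp
  ultimately show ?thesis
    using \<open>v \<in> row_space a r (\<lambda>s j. \<theta> j ^ s)\<close> by blast
qed

lemma min_dist_vandermonde_row_space:
  fixes \<theta> :: "nat \<Rightarrow> 'a::field"
  assumes "inj_on \<theta> {..<r}" "0 < a" "a \<le> r"
  shows "min_dist r (row_space a r (\<lambda>s j. \<theta> j ^ s)) (r - a + 1)"
  using min_dist_ge_vandermonde_row_space[OF assms(1,3)] vandermonde_row_space_weight_attained[OF assms]
  unfolding min_dist_def by blast


definition block :: "nat \<Rightarrow> nat set \<Rightarrow> nat \<Rightarrow> nat set" where
  "block r T i = {k\<in>T. k div r = i}"

definition excess :: "nat \<Rightarrow> nat \<Rightarrow> nat \<Rightarrow> nat set \<Rightarrow> nat" where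
  "excess r g a T = (\<Sum>i<g. card (block r T i) - a)"

lemma finite_block: "finite T \<Longrightarrow> finite (block r T i)"
  by (simp add: block_def)

lemma block_Diff_singleton: "block r (T - {k}) i = block r T i - {k}"
  by (auto simp: block_def)

lemma card_block_le:
  assumes "0 < r"
  shows "card (block r T i) \<le> r"
proof -
  have "block r T i \<subseteq> (\<lambda>j. i * r + j) ` {..<r}"
  proof
    fix k assume "k \<in> block r T i"
    then have "k = i * r + k mod r" and "k mod r < r"
      using assms by (auto simp: block_def)
    then show "k \<in> (\<lambda>j. i * r + j) ` {..<r}"
      by blast
  qed
  then have "card (block r T i) \<le> card ((\<lambda>j. i * r + j) ` {..<r})"
    by (intro card_mono) auto
  also have "\<dots> \<le> r"
    using card_image_le[of "{..<r}" "\<lambda>j. i * r + j"] by simp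
  finally show ?thesis .
qed

lemma inj_on_block:
  assumes "inj_on \<theta> {..<r}" "0 < r"
  shows "inj_on (\<lambda>k. \<theta> (k mod r)) (block r T i)"
proof (rule inj_onI)
  fix k k' assume "k \<in> block r T i" "k' \<in> block r T i" "\<theta> (k mod r) = \<theta> (k' mod r)"
  then have "k mod r = k' mod r" and "k div r = k' div r"
    using assms by (auto simp: block_def dest: inj_onD)
  then show "k = k'"
    by (metis div_mult_mod_eq)
qed

lemma sum_blocks:
  assumes "finite T" "T \<subseteq> {..<g * r}"
  shows "sum f T = (\<Sum>i<g. \<Sum>k\<in>block r T i. f k)"
proof -
  have "(\<lambda>k. k div r) ` T \<subseteq> {..<g}"
    using assms(2) by (auto simp: less_mult_imp_div_less)
  from sum.group[OF assms(1) _ this, of f] show ?thesis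
    by (simp add: block_def)
qed

lemma card_block_le_excess: "i < g \<Longrightarrow> card (block r T i) - a \<le> excess r g a T"
  unfolding excess_def by (rule member_le_sum) auto

lemma excess_Diff_singleton_less:
  assumes T: "finite T" "k \<in> T" and big: "a < card (block r T (k div r))" and g: "k div r < g"
  shows "excess r g a (T - {k}) < excess r g a T"
  unfolding excess_def
proof (rule sum_strict_mono_ex1)
  have card_le: "card (block r (T - {k}) i) \<le> card (block r T i)" for i
    using T by (intro card_mono finite_block) (auto simp: block_def)
  then show "\<forall>i\<in>{..<g}. card (block r (T - {k}) i) - a \<le> card (block r T i) - a"
    by (simp add: diff_le_mono)
  have "k \<in> block r T (k div r)"
    using T by (simp add: block_def)
  then have "card (block r (T - {k}) (k div r)) = card (block r T (k div r)) - 1"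
    using T by (simp add: block_Diff_singleton card_Diff_singleton finite_block)
  then show "\<exists>i\<in>{..<g}. card (block r (T - {k}) i) - a < card (block r T i) - a"
    using big g by (intro bexI[of _ "k div r"]) auto
qed simp

lemma excess_eq_card_diff:
  assumes "finite S" "S \<subseteq> {..<g * r}" "\<forall>i<g. a \<le> card (block r S i)"
  shows "excess r g a S = card S - g * a"
proof -
  have "card S = (\<Sum>i<g. card (block r S i))"
    using sum_blocks[OF assms(1,2), of "\<lambda>_. 1::nat"] by simp
  moreover have "excess r g a S = (\<Sum>i<g. card (block r S i)) - (\<Sum>i<g. a)"
    unfolding excess_def using assms(3) by (intro sum_subtractf_nat) auto
  ultimately show ?thesis
    by simp
qed

lemma card_big_blocks_le: "card {i. i < g \<and> a < card (block r T i)} \<le> min (excess r g a T) g"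
proof -
  let ?G = "{i. i < g \<and> a < card (block r T i)}"
  have "card ?G = (\<Sum>i\<in>?G. 1)"
    by simp
  also have "\<dots> \<le> (\<Sum>i\<in>?G. card (block r T i) - a)"
    by (rule sum_mono) auto
  also have "\<dots> \<le> excess r g a T"
    unfolding excess_def by (rule sum_mono2) auto
  finally show ?thesis
    using card_mono[of "{..<g}" ?G] by auto
qed

lemma block_initial_segments:
  assumes a: "a \<le> r" and i: "i < g"
  shows "block r {k. k < g * r \<and> k mod r < a} i = (\<lambda>s. i * r + s) ` {..<a}"
proof
  show "block r {k. k < g * r \<and> k mod r < a} i \<subseteq> (\<lambda>s. i * r + s) ` {..<a}"
  proof
    fix k assume "k \<in> block r {k. k < g * r \<and> k mod r < a} i"
    then have "k = i * r + k mod r" "k mod r < a"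
      by (auto simp: block_def)
    then show "k \<in> (\<lambda>s. i * r + s) ` {..<a}"
      by blast
  qed
  show "(\<lambda>s. i * r + s) ` {..<a} \<subseteq> block r {k. k < g * r \<and> k mod r < a} i"
  proof
    fix k assume "k \<in> (\<lambda>s. i * r + s) ` {..<a}"
    then obtain s where s: "s < a" "k = i * r + s"
      by blast
    have "i * r + s < (i + 1) * r"
      using s a by simp
    also have "\<dots> \<le> g * r"
      using i by (intro mult_right_mono) auto
    finally show "k \<in> block r {k. k < g * r \<and> k mod r < a} i"
      using s a by (simp add: block_def)
  qed
qed

lemma exists_block_selection:
  assumes a: "a \<le> r" and h: "g * a + h \<le> g * r"
  shows "\<exists>S. S \<subseteq> {..<g * r} \<and> card S = g * a + h \<and> (\<forall>i<g. a \<le> card (block r S i))"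
proof -
  define B where "B = {k. k < g * r \<and> k mod r < a}"
  have B_blocks: "card (block r B i) = a" if "i < g" for i
    unfolding B_def block_initial_segments[OF a that] by (simp add: card_image inj_on_def)
  have B_sub: "B \<subseteq> {..<g * r}"
    by (auto simp: B_def)
  then have "card B = g * a"
    using sum_blocks[OF finite_subset[OF B_sub] B_sub, of "\<lambda>_. 1::nat"] B_blocks by simp
  then have "h \<le> card ({..<g * r} - B)"
    using B_sub h by (simp add: card_Diff_subset finite_subset)
  then obtain T where T: "T \<subseteq> {..<g * r} - B" "card T = h" "finite T"
    by (rule obtain_subset_with_card_n)
  have "card (B \<union> T) = g * a + h"
    using T \<open>card B = g * a\<close> B_sub by (subst card_Un_disjoint) (auto intro: finite_subset)
  moreover have "a \<le> card (block r (B \<union> T) i)" if "i < g" for i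
  proof -
    have "block r B i \<subseteq> block r (B \<union> T) i"
      by (auto simp: block_def)
    moreover have "finite (block r (B \<union> T) i)"
      using B_sub T(3) by (intro finite_block) (auto intro: finite_subset)
    ultimately show ?thesis
      using B_blocks[OF that] card_mono by metis
  qed
  moreover have "B \<union> T \<subseteq> {..<g * r}"
    using B_sub T by auto
  ultimately show ?thesis
    by blast
qed


locale mr_lrc_construction =
  fixes q r g a h m \<nu> :: nat and E :: "'l::{finite,field} set"
    and \<theta> \<mu> \<xi> \<omega> :: "nat \<Rightarrow> 'l"
  assumes q_pos: "0 < q"
    and power_q_add: "\<And>x y :: 'l. (x + y) ^ q = x ^ q + y ^ q"
    and E_subfield: "is_subfield E" and fixed_subset_E: "{x. x ^ q = x} \<subseteq> E"
    and \<theta>_fixed: "\<And>j. j < r \<Longrightarrow> \<theta> j ^ q = \<theta> j" and \<theta>_inj: "inj_on \<theta> {..<r}"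
    and \<mu>_in_E: "\<And>t. t < m \<Longrightarrow> \<mu> t \<in> E" and \<mu>_indep: "independent_over {x. x ^ q = x} \<mu> m"
    and \<xi>_in_E: "\<And>i. i < g \<Longrightarrow> \<xi> i \<in> E" and \<xi>_inj: "inj_on \<xi> {..<g}"
    and \<omega>_indep: "independent_over E \<omega> \<nu>" and \<nu>_ge: "min h g \<le> \<nu>"
    and m_ge: "min r (a + h) \<le> m" and r_pos: "0 < r"
begin

abbreviation K :: "'l set" where
  "K \<equiv> {x. x ^ q = x}"

definition \<beta> :: "nat \<Rightarrow> 'l" where
  "\<beta> j = (\<Sum>t<m. \<theta> j ^ t * \<mu> t)"

definition \<alpha> :: "nat \<Rightarrow> 'l" where
  "\<alpha> i = (\<Sum>s<\<nu>. \<xi> i ^ s * \<omega> s)"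

definition \<gamma> :: "nat \<Rightarrow> 'l" where
  "\<gamma> k = \<alpha> (k div r) * \<beta> (k mod r)"

definition local_checks :: "nat set \<Rightarrow> (nat \<Rightarrow> 'l) \<Rightarrow> bool" where
  "local_checks T c \<longleftrightarrow> (\<forall>i<g. \<forall>s<a. (\<Sum>k\<in>block r T i. c k * \<theta> (k mod r) ^ s) = 0)"

definition heavy_checks :: "nat set \<Rightarrow> (nat \<Rightarrow> 'l) \<Rightarrow> nat \<Rightarrow> nat \<Rightarrow> bool" where
  "heavy_checks T c u n \<longleftrightarrow> (\<forall>s<n. (\<Sum>k\<in>T. c k * \<gamma> k ^ (q ^ (u + s))) = 0)"

lemma K_subfield: "is_subfield K"
  by (rule power_fixed_points_subfield[OF power_q_add q_pos])

lemma power_q_sum: "(sum f A :: 'l) ^ q = (\<Sum>i\<in>A. f i ^ q)"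
  by (induction A rule: infinite_finite_induct) (simp_all add: power_q_add q_pos power_0_left)

lemma power_q_power_sum: "(sum f A :: 'l) ^ (q ^ u) = (\<Sum>i\<in>A. f i ^ (q ^ u))"
proof (induction u arbitrary: f)
  case (Suc u)
  then show ?case
    by (simp add: power_mult power_q_sum flip: power_Suc2)
qed simp

lemma sum_diff_power_q:
  fixes c y :: "nat \<Rightarrow> 'l"
  shows "(\<Sum>k\<in>A. (c k - c k ^ q) * y k ^ q) = (\<Sum>k\<in>A. c k * y k ^ q) - (\<Sum>k\<in>A. c k * y k) ^ q"
  by (simp add: power_q_sum power_mult_distrib left_diff_distrib sum_subtractf)

lemma K_coefficients_power_q_sum:
  fixes c y :: "nat \<Rightarrow> 'l"
  assumes "\<And>k. k \<in> T \<Longrightarrow> c k \<in> K"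
  shows "(\<Sum>k\<in>T. c k * y k ^ (q ^ u)) = (\<Sum>k\<in>T. c k * y k) ^ (q ^ u)"
  using assms by (simp add: power_q_power_sum power_mult_distrib power_fixed_power_power)

lemma \<beta>_in_E: "j < r \<Longrightarrow> \<beta> j \<in> E"
  unfolding \<beta>_def using \<theta>_fixed fixed_subset_E \<mu>_in_E
  by (intro subfield_sum[OF E_subfield] subfield_mult[OF E_subfield] subfield_power[OF E_subfield]) auto

lemma block_vanishes:
  assumes "finite T" "card (block r T i) \<le> M"
    and "\<forall>t<M. (\<Sum>k\<in>block r T i. c k * \<theta> (k mod r) ^ t) = 0"
  shows "\<forall>k\<in>block r T i. c k = 0"
  using assms inj_on_block[OF \<theta>_inj r_pos] finite_block
  by (intro vandermonde_cols_independent) auto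

lemma local_checks_small_block:
  assumes "local_checks T c" "finite T" "i < g" "card (block r T i) \<le> a"
  shows "\<forall>k\<in>block r T i. c k = 0"
  using assms by (intro block_vanishes) (auto simp: local_checks_def)

lemma \<alpha>_combination_zero:
  assumes G: "G \<subseteq> {..<g}" "card G \<le> \<nu>" and w: "\<And>i. i \<in> G \<Longrightarrow> w i \<in> E"
    and sum0: "(\<Sum>i\<in>G. \<alpha> i * w i) = 0"
  shows "\<forall>i\<in>G. w i = 0"
proof -
  have "(\<Sum>s<\<nu>. (\<Sum>i\<in>G. w i * \<xi> i ^ s) * \<omega> s) = (\<Sum>i\<in>G. \<alpha> i * w i)"
    unfolding \<alpha>_def sum_distrib_left sum_distrib_right
    by (subst sum.swap) (simp add: mult_ac)
  moreover have "(\<Sum>i\<in>G. w i * \<xi> i ^ s) \<in> E" for s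
    using G w \<xi>_in_E
    by (intro subfield_sum[OF E_subfield] subfield_mult[OF E_subfield] subfield_power[OF E_subfield]) auto
  ultimately have "(\<Sum>i\<in>G. w i * \<xi> i ^ s) = 0" if "s < \<nu>" for s
    using sum0 that by (intro independent_overD[OF \<omega>_indep, where c = "\<lambda>s. \<Sum>i\<in>G. w i * \<xi> i ^ s"]) auto
  then show ?thesis
    using G finite_subset[OF G(1)] inj_on_subset[OF \<xi>_inj G(1)]
    by (intro vandermonde_cols_independent) auto
qed

lemma \<beta>_combination_zero:
  assumes T: "finite T" "card (block r T i) \<le> m" and c: "\<And>k. k \<in> block r T i \<Longrightarrow> c k \<in> K"
    and sum0: "(\<Sum>k\<in>block r T i. c k * \<beta> (k mod r)) = 0"
  shows "\<forall>k\<in>block r T i. c k = 0"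
proof (rule block_vanishes[OF T])
  have "(\<Sum>t<m. (\<Sum>k\<in>block r T i. c k * \<theta> (k mod r) ^ t) * \<mu> t) = (\<Sum>k\<in>block r T i. c k * \<beta> (k mod r))"
    unfolding \<beta>_def sum_distrib_left sum_distrib_right
    by (subst sum.swap) (simp add: mult_ac)
  moreover have "(\<Sum>k\<in>block r T i. c k * \<theta> (k mod r) ^ t) \<in> K" for t
    using c \<theta>_fixed r_pos
    by (intro subfield_sum[OF K_subfield] subfield_mult[OF K_subfield] subfield_power[OF K_subfield]) auto
  ultimately show "\<forall>t<m. (\<Sum>k\<in>block r T i. c k * \<theta> (k mod r) ^ t) = 0"
    using sum0
    by (intro allI impI independent_overD[OF \<mu>_indep, where c = "\<lambda>t. \<Sum>k\<in>block r T i. c k * \<theta> (k mod r) ^ t"]) auto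
qed

lemma local_checks_nonzero_big_block:
  assumes checks: "local_checks T c" and T: "T \<subseteq> {..<g * r}" and k: "k \<in> T" "c k \<noteq> 0"
  shows "k div r < g" and "a < card (block r T (k div r))"
proof -
  show g: "k div r < g"
    using T k by (auto simp: less_mult_imp_div_less)
  have "finite T"
    using T finite_subset by blast
  then show "a < card (block r T (k div r))"
    using local_checks_small_block[OF checks _ g] k by (force simp: block_def)
qed

lemma sum_\<gamma>_blocks:
  assumes "finite T" "T \<subseteq> {..<g * r}"
  shows "(\<Sum>k\<in>T. c k * \<gamma> k) = (\<Sum>i<g. \<alpha> i * (\<Sum>k\<in>block r T i. c k * \<beta> (k mod r)))"
  unfolding sum_blocks[OF assms] \<gamma>_def sum_distrib_left
  by (intro sum.cong refl) (simp add: block_def mult_ac)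

lemma K_coefficients_zero:
  assumes T: "T \<subseteq> {..<g * r}" and excess: "excess r g a T \<le> h"
    and c: "\<And>k. k \<in> T \<Longrightarrow> c k \<in> K" and checks: "local_checks T c"
    and sum0: "(\<Sum>k\<in>T. c k * \<gamma> k) = 0"
  shows "\<forall>k\<in>T. c k = 0"
proof -
  have fin: "finite T"
    using T finite_subset by blast
  define G where "G = {i. i < g \<and> a < card (block r T i)}"
  define w where "w i = (\<Sum>k\<in>block r T i. c k * \<beta> (k mod r))" for i
  have "card G \<le> \<nu>"
    using card_big_blocks_le[of g a r T] excess \<nu>_ge unfolding G_def by linarith
  moreover have "w i \<in> E" for i
    unfolding w_def using c fixed_subset_E \<beta>_in_E r_pos
    by (intro subfield_sum[OF E_subfield] subfield_mult[OF E_subfield]) (auto simp: block_def)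
  moreover have "(\<Sum>i\<in>G. \<alpha> i * w i) = 0"
  proof -
    have "w i = 0" if "i < g" "i \<notin> G" for i
      using local_checks_small_block[OF checks fin] that by (simp add: G_def w_def)
    then have "(\<Sum>i\<in>G. \<alpha> i * w i) = (\<Sum>i<g. \<alpha> i * w i)"
      by (intro sum.mono_neutral_left) (auto simp: G_def)
    then show ?thesis
      using sum0 sum_\<gamma>_blocks[OF fin T] by (simp add: w_def)
  qed
  ultimately have "\<forall>i\<in>G. w i = 0"
    by (intro \<alpha>_combination_zero) (auto simp: G_def)
  then have big: "\<forall>k\<in>block r T i. c k = 0" if "i \<in> G" for i
  proof (intro \<beta>_combination_zero[OF fin])
    have "card (block r T i) - a \<le> h"
      using card_block_le_excess[of i g r T a] excess that by (simp add: G_def)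
    then show "card (block r T i) \<le> m"
      using card_block_le[OF r_pos, of T i] m_ge by linarith
  qed (use c that in \<open>auto simp: block_def w_def\<close>)
  show ?thesis
  proof (rule ballI, rule ccontr)
    fix k assume "k \<in> T" "c k \<noteq> 0"
    then have "k div r \<in> G"
      using local_checks_nonzero_big_block[OF checks T] by (simp add: G_def)
    then show False
      using big \<open>k \<in> T\<close> \<open>c k \<noteq> 0\<close> by (auto simp: block_def)
  qed
qed

lemma K_coefficients_heavy_checks_zero:
  assumes "T \<subseteq> {..<g * r}" "excess r g a T \<le> h" "\<And>k. k \<in> T \<Longrightarrow> c k \<in> K"
    and checks: "local_checks T c" "heavy_checks T c u (Suc n)"
  shows "\<forall>k\<in>T. c k = 0"
proof (rule K_coefficients_zero[OF assms(1-3) checks(1)])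
  have "(\<Sum>k\<in>T. c k * \<gamma> k) ^ (q ^ u) = (\<Sum>k\<in>T. c k * \<gamma> k ^ (q ^ u))"
    by (rule K_coefficients_power_q_sum[symmetric]) (rule assms(3))
  also have "\<dots> = 0"
    using checks(2)[unfolded heavy_checks_def, rule_format, of 0] by simp
  finally show "(\<Sum>k\<in>T. c k * \<gamma> k) = 0"
    using q_pos by simp
qed

lemma local_checks_scale: "local_checks T c \<Longrightarrow> local_checks T (\<lambda>k. c k / z)"
  by (simp add: local_checks_def flip: sum_divide_distrib)

lemma heavy_checks_scale: "heavy_checks T c u n \<Longrightarrow> heavy_checks T (\<lambda>k. c k / z) u n"
  by (simp add: heavy_checks_def flip: sum_divide_distrib)

lemma local_checks_Diff_singleton:
  "local_checks T c \<Longrightarrow> finite T \<Longrightarrow> c k = 0 \<Longrightarrow> local_checks (T - {k}) c"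
  by (simp add: local_checks_def block_Diff_singleton sum_diff1 finite_block)

lemma heavy_checks_Diff_singleton:
  "heavy_checks T c u n \<Longrightarrow> finite T \<Longrightarrow> c k = 0 \<Longrightarrow> heavy_checks (T - {k}) c u n"
  by (simp add: heavy_checks_def sum_diff1)

lemma local_checks_diff_power_q:
  assumes "local_checks T c"
  shows "local_checks T (\<lambda>k. c k - c k ^ q)"
  unfolding local_checks_def
proof (intro allI impI)
  fix i s assume "i < g" "s < a"
  have "(\<theta> (k mod r) ^ s) ^ q = \<theta> (k mod r) ^ s" for k
    using \<theta>_fixed r_pos by (simp flip: power_mult_distrib power_mult add: mult.commute[of s] power_mult)
  then have "(\<Sum>k\<in>block r T i. (c k - c k ^ q) * \<theta> (k mod r) ^ s)
      = (\<Sum>k\<in>block r T i. c k * \<theta> (k mod r) ^ s) - (\<Sum>k\<in>block r T i. c k * \<theta> (k mod r) ^ s) ^ q"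
    using sum_diff_power_q[of c "\<lambda>k. \<theta> (k mod r) ^ s" "block r T i"] by simp
  then show "(\<Sum>k\<in>block r T i. (c k - c k ^ q) * \<theta> (k mod r) ^ s) = 0"
    using assms \<open>i < g\<close> \<open>s < a\<close> q_pos by (simp add: local_checks_def)
qed

lemma heavy_checks_diff_power_q:
  assumes "heavy_checks T c u (Suc n)"
  shows "heavy_checks T (\<lambda>k. c k - c k ^ q) (Suc u) n"
  unfolding heavy_checks_def
proof (intro allI impI)
  fix s assume "s < n"
  have "\<gamma> k ^ (q ^ (Suc u + s)) = (\<gamma> k ^ (q ^ (u + s))) ^ q" for k
    by (simp add: mult.commute flip: power_mult)
  then have "(\<Sum>k\<in>T. (c k - c k ^ q) * \<gamma> k ^ (q ^ (Suc u + s)))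
      = (\<Sum>k\<in>T. c k * \<gamma> k ^ (q ^ (u + Suc s))) - (\<Sum>k\<in>T. c k * \<gamma> k ^ (q ^ (u + s))) ^ q"
    using sum_diff_power_q[of c "\<lambda>k. \<gamma> k ^ (q ^ (u + s))" T] by simp
  then show "(\<Sum>k\<in>T. (c k - c k ^ q) * \<gamma> k ^ (q ^ (Suc u + s))) = 0"
    using assms[unfolded heavy_checks_def, rule_format, of s] \<open>s < n\<close> q_pos
      assms[unfolded heavy_checks_def, rule_format, of "Suc s"] by (simp add: power_0_left)
qed

lemma descent_differences:
  assumes "finite T" "local_checks T c" "heavy_checks T c u (Suc n)" "c k = 1"
  shows "local_checks (T - {k}) (\<lambda>k. c k - c k ^ q)"
    and "heavy_checks (T - {k}) (\<lambda>k. c k - c k ^ q) (Suc u) n"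
  using assms local_checks_Diff_singleton[OF local_checks_diff_power_q]
    heavy_checks_Diff_singleton[OF heavy_checks_diff_power_q] by simp_all

lemma frobenius_descent:
  assumes "n \<le> h" "T \<subseteq> {..<g * r}" "excess r g a T \<le> n" "local_checks T c" "heavy_checks T c u n"
  shows "\<forall>k\<in>T. c k = 0"
  using assms
proof (induction n arbitrary: T c u)
  case 0
  show ?case
  proof (rule ballI, rule ccontr)
    fix k assume "k \<in> T" "c k \<noteq> 0"
    then have "k div r < g" "a < card (block r T (k div r))"
      using local_checks_nonzero_big_block[OF "0.prems"(4,2)] by auto
    then show False
      using card_block_le_excess[of "k div r" g r T a] "0.prems"(3) by simp
  qed
next
  case (Suc n)
  show ?case
  proof (rule ballI, rule ccontr)
    fix k0 assume k0: "k0 \<in> T" "c k0 \<noteq> 0"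
    have fin: "finite T"
      using Suc.prems(2) finite_subset by blast
    define c' where "c' k = c k / c k0" for k
    have c'_k0: "c' k0 = 1"
      using k0 by (simp add: c'_def)
    have checks: "local_checks T c'" "heavy_checks T c' u (Suc n)"
      unfolding c'_def using Suc.prems(4,5) by (simp_all add: local_checks_scale heavy_checks_scale)
    have "excess r g a (T - {k0}) < excess r g a T"
      using local_checks_nonzero_big_block[OF Suc.prems(4,2) k0] by (intro excess_Diff_singleton_less fin k0)
    then have "\<forall>k\<in>T - {k0}. c' k - c' k ^ q = 0"
      using Suc.prems descent_differences[OF fin checks c'_k0] by (intro Suc.IH) auto
    then have "c' k \<in> K" if "k \<in> T" for k
      using that c'_k0 by (cases "k = k0") auto
    then have "\<forall>k\<in>T. c' k = 0"
      using Suc.prems checks by (intro K_coefficients_heavy_checks_zero) auto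
    then show False
      using k0 c'_k0 by auto
  qed
qed

definition parity_check :: "nat \<Rightarrow> nat \<Rightarrow> 'l" where
  "parity_check = lrc_H g r h a (\<lambda>i s j. \<theta> j ^ s) (\<lambda>i s j. (\<alpha> i * \<beta> j) ^ (q ^ s))"

lemma parity_check_local_row:
  assumes "i < g" "s < a"
  shows "i * a + s < g * a" and "parity_check (i * a + s) j = (if j div r = i then \<theta> (j mod r) ^ s else 0)"
proof -
  have "i * a + s < (i + 1) * a"
    using assms by simp
  also have "\<dots> \<le> g * a"
    using assms by (intro mult_right_mono) auto
  finally show "i * a + s < g * a" .
  then show "parity_check (i * a + s) j = (if j div r = i then \<theta> (j mod r) ^ s else 0)"
    using assms by (simp add: parity_check_def lrc_H_def)
qed

lemma parity_check_heavy_row: "parity_check (g * a + s) k = \<gamma> k ^ (q ^ s)"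
  by (simp add: parity_check_def lrc_H_def \<gamma>_def)

lemma parity_check_cols_indep:
  assumes S: "S \<subseteq> {..<g * r}" "card S = g * a + h" and blocks: "\<forall>i<g. a \<le> card (block r S i)"
  shows "cols_indep (g * a + h) parity_check S"
  unfolding cols_indep_def
proof (intro allI impI)
  fix c assume rows: "\<forall>row<g * a + h. (\<Sum>j\<in>S. c j * parity_check row j) = 0"
  have fin: "finite S"
    using S finite_subset by blast
  have "local_checks S c"
    unfolding local_checks_def
  proof (intro allI impI)
    fix i s assume "i < g" "s < a"
    have "(\<Sum>k\<in>block r S i. c k * \<theta> (k mod r) ^ s) = (\<Sum>j\<in>S. if j div r = i then c j * \<theta> (j mod r) ^ s else 0)"
      unfolding block_def by (rule sum.inter_filter[OF fin])
    also have "\<dots> = (\<Sum>j\<in>S. c j * parity_check (i * a + s) j)"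
      using parity_check_local_row[OF \<open>i < g\<close> \<open>s < a\<close>] by (intro sum.cong) simp_all
    also have "\<dots> = 0"
      using rows parity_check_local_row(1)[OF \<open>i < g\<close> \<open>s < a\<close>] by simp
    finally show "(\<Sum>k\<in>block r S i. c k * \<theta> (k mod r) ^ s) = 0" .
  qed
  moreover have "heavy_checks S c 0 h"
    using rows by (simp add: heavy_checks_def flip: parity_check_heavy_row)
  moreover have "excess r g a S = h"
    using excess_eq_card_diff[OF fin S(1) blocks] S(2) by simp
  ultimately show "\<forall>j\<in>S. c j = 0"
    using S by (intro frobenius_descent[of h S c 0]) auto
qed

lemma MR_LRC_null_space:
  assumes a: "0 < a" "a \<le> r" and g: "0 < g" and h: "0 < h" "g * a + h < g * r"
  shows "MR_LRC (r * g) r h a (null_space (r * g) (g * a + h) parity_check)"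
proof -
  have MR: "cols_indep (g * a + h) parity_check S"
    if "S \<subseteq> {..<r * g}" "card S = g * a + h" "\<forall>i<g. a \<le> card {j\<in>S. j div r = i}" for S
    using that by (intro parity_check_cols_indep) (auto simp: block_def mult.commute)
  obtain S where "S \<subseteq> {..<g * r}" "card S = g * a + h" "\<forall>i<g. a \<le> card (block r S i)"
    using exists_block_selection[OF a(2), of g h] h by auto
  then have "linear_code (r * g) (r * g - (g * a + h)) (null_space (r * g) (g * a + h) parity_check)"
    by (intro linear_code_null_space MR) (auto simp: block_def mult.commute)
  moreover have "linear_code r a (row_space a r (\<lambda>s j. \<theta> j ^ s))"
    and "min_dist r (row_space a r (\<lambda>s j. \<theta> j ^ s)) (r - a + 1)"
    using linear_code_vandermonde_row_space[OF \<theta>_inj a(2)] min_dist_vandermonde_row_space[OF \<theta>_inj a] .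
  ultimately show ?thesis
    unfolding MR_LRC_def Let_def parity_check_def null_space_def using r_pos a g h MR
    by (intro conjI exI[of _ "\<lambda>i s j. \<theta> j ^ s"] exI[of _ "\<lambda>i s j. (\<alpha> i * \<beta> j) ^ (q ^ s)"])
      (auto simp: diff_diff_left parity_check_def null_space_def)
qed

end

lemma mr_lrc_construction_exists:
  fixes q r g a h m \<nu> :: nat
  assumes p: "prime p" "0 < e" "q = p ^ e" and card: "CARD('l::{finite,field}) = q ^ (m * \<nu>)"
    and pos: "0 < r" "0 < m" "0 < \<nu>" and r_le: "r \<le> q" and g_le: "g \<le> q ^ m"
    and m_ge: "min r (a + h) \<le> m" and \<nu>_ge: "min h g \<le> \<nu>"
  shows "\<exists>(E :: 'l set) \<theta> \<mu> \<xi> \<omega>. mr_lrc_construction q r g a h m \<nu> E \<theta> \<mu> \<xi> \<omega>"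
proof -
  define K E where "K = {x::'l. x ^ q = x}" and "E = {x::'l. x ^ (q ^ m) = x}"
  have "CARD('l) = p ^ (e * (m * \<nu>))"
    using card p(3) by (simp add: power_mult)
  then have "CHAR('l) = p"
    by (rule CHAR_finite_field[OF p(1)]) (use p pos in simp)
  then have add: "(x + y) ^ (q ^ k) = x ^ (q ^ k) + y ^ (q ^ k)" for x y :: 'l and k
    using p by (intro freshmans_dream'[where n = "e * k"]) (simp_all add: power_mult)
  have q: "1 < q"
    unfolding p(3) using prime_gt_1_nat[OF p(1)] p(2) by (rule one_less_power)
  have K: "is_subfield K" "card K = q"
    unfolding K_def using add[where k = 1] q
    by (simp_all add: power_fixed_points_subfield card_power_fixed_points[OF card] pos)
  have E: "is_subfield E" "card E = q ^ m"
  proof -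
    show "is_subfield E"
      unfolding E_def by (rule power_fixed_points_subfield[OF add]) (use q in simp)
    show "card E = q ^ m"
      unfolding E_def using card one_less_power[OF q pos(2)] pos
      by (simp add: card_power_fixed_points flip: power_mult)
  qed
  obtain \<theta> where \<theta>: "\<theta> ` {..<r} \<subseteq> K" "inj_on \<theta> {..<r}"
    using card_le_inj[of "{..<r}" K] K r_le by (auto simp: K_def)
  obtain \<xi> where \<xi>: "\<xi> ` {..<g} \<subseteq> E" "inj_on \<xi> {..<g}"
    using card_le_inj[of "{..<g}" E] E g_le by (auto simp: E_def)
  obtain \<mu> where \<mu>: "\<forall>t<m. \<mu> t \<in> E" "independent_over K \<mu> m"
    using exists_independent_over[of K E m] K E by (auto simp: K_def E_def)
  obtain \<omega> where "independent_over E \<omega> \<nu>"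
    using exists_independent_over[of E UNIV \<nu>] E card by (auto simp: E_def power_mult)
  moreover have "K \<subseteq> E"
    unfolding K_def E_def using power_fixed_power_power by blast
  ultimately have "mr_lrc_construction q r g a h m \<nu> E \<theta> \<mu> \<xi> \<omega>"
    using \<theta> \<xi> \<mu> E m_ge \<nu>_ge pos add[where k = 1] q
    by unfold_locales (auto simp: K_def)
  then show ?thesis
    by blast
qed

theorem theorem3p7:
  fixes r g a h m n q :: nat
    and Fq :: "'q::{finite,field} itself"
    and Fl :: "'l::{finite,field} itself"
  assumes pos: "0 < r" "0 < g" "0 < a" "0 < h" "0 < m"
    and a_le: "a \<le> r"
    and ga_h: "g * a + h < g * r"
    and n_def: "n = r * g"
    and q_pp: "\<exists>p k. prime p \<and> 0 < k \<and> q = p ^ k"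
    and card_q: "CARD('q) = q"
    and q_ge: "q \<ge> r"
    and qm: "real (q ^ m) \<ge> real (m * n) / real r"
    and mds: "\<exists>C :: (nat \<Rightarrow> 'q) set. linear_code r (r - a) C \<and> min_dist r C (a + 1)"
    and cases: "m \<ge> r \<or>
       (m < r \<and> (\<exists>C :: (nat \<Rightarrow> 'q) set. linear_code r (r - m) C \<and> min_dist_ge r C (h + a + 1)))"
    and card_l: "CARD('l) = q ^ (min (h * m) (n * m div r))"
  shows "\<exists>C :: (nat \<Rightarrow> 'l) set. MR_LRC n r h a C"
proof -
  define \<nu> where "\<nu> = min h g"
  have \<nu>: "0 < \<nu>" "min h g \<le> \<nu>"
    using pos by (simp_all add: \<nu>_def)
  have card: "CARD('l) = q ^ (m * \<nu>)"
    using card_l n_def pos by (simp add: \<nu>_def min_def mult.commute)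
  obtain p e where p: "prime p" "0 < e" "q = p ^ e"
    using q_pp by blast
  have "g \<le> m * g" "real (m * g) \<le> real (q ^ m)"
    using qm pos n_def by simp_all
  then have "g \<le> q ^ m"
    by (simp only: of_nat_le_iff)
  moreover have "min r (a + h) \<le> m"
    using cases
  proof
    assume "m < r \<and> (\<exists>C :: (nat \<Rightarrow> 'q) set. linear_code r (r - m) C \<and> min_dist_ge r C (h + a + 1))"
    then obtain C :: "(nat \<Rightarrow> 'q) set"
      where "linear_code r (r - m) C" "min_dist_ge r C (h + a + 1)" "m < r"
      by blast
    then have "h + a + 1 \<le> m + 1"
      by (rule singleton_redundancy_bound)
    then show ?thesis
      by simp
  qed simp
  ultimately have "\<exists>(E :: 'l set) \<theta> \<mu> \<xi> \<omega>. mr_lrc_construction q r g a h m \<nu> E \<theta> \<mu> \<xi> \<omega>"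
    using mr_lrc_construction_exists[OF p card pos(1) pos(5) \<nu>(1) q_ge] \<nu>(2) by blast
  then obtain E :: "'l set" and \<theta> \<mu> \<xi> \<omega> where "mr_lrc_construction q r g a h m \<nu> E \<theta> \<mu> \<xi> \<omega>"
    by blast
  then interpret mr_lrc_construction q r g a h m \<nu> E \<theta> \<mu> \<xi> \<omega> .
  show ?thesis
    using MR_LRC_null_space pos a_le ga_h n_def by blast
qed

end
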